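(* Let $p(\mathbf x)=W_2\rho_{r_1}(W_1\mathbf x)$ be a two-layer hPNN with architecture $((d_0,d_1,d_2),(r_1))$, $d_0,d_1\ge 2$, $d_2\ge 1$, $r_1\ge 3$, such that $\operatorname{krank}(W_2)\ge 1$, $\operatorname{krank}(W_1^T)\ge 2$ and $$r_1\ \ge\ 2\left\lceil\frac{2d_1-\operatorname{krank}(W_1^T)}{2\operatorname{krank}(W_1^T)-2}\right\rceil+1.$$ Then the representation $(W_1,W_2)$ of $p$ is unique.
   Context: Work over $\mathbb R$. $\rho_r(z_1,\dots,z_d)=(z_1^r,\dots,z_d^r)$. A two-layer hPNN with architecture $((d_0,d_1,d_2),(r_1))$ and weights $(W_1,W_2)$, $W_1\in\mathbb R^{d_1\times d_0}$, $W_2\in\mathbb R^{d_2\times d_1}$, is the map $\mathbf x\mapsto W_2\rho_{r_1}(W_1\mathbf x)$. Weights $(W_1',W_2')$ are equivalent to $(W_1,W_2)$ if $W_1'=PDW_1$ and $W_2'=W_2D^{-r_1}P^T$ for some permutation matrix $P$ and invertible diagonal matrix $D$. The representation is unique if every weight pair of the same architecture defining the same function is equivalent to it. The Kruskal rank $\operatorname{krank}(A)$ of a matrix $A$ is the largest integer $k$ such that every set of $k$ columns of $A$ is linearly independent. *)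

theory Defs
  imports "HOL-Analysis.Analysis"
begin

definition rho :: "nat \<Rightarrow> real^'d \<Rightarrow> real^'d" where
  "rho r z = (\<chi> i. (z $ i) ^ r)"

text \<open>Two-layer hPNN with architecture ((d0,d1,d2),(r1)); the widths are the
  cardinalities of the index types 'd0, 'd1, 'd2.\<close>
definition hpnn2 :: "nat \<Rightarrow> real^'d0^'d1 \<Rightarrow> real^'d1^'d2 \<Rightarrow> real^'d0 \<Rightarrow> real^'d2" where
  "hpnn2 r W1 W2 = (\<lambda>x. W2 *v rho r (W1 *v x))"

definition permutation_matrix :: "real^'n^'n \<Rightarrow> bool" where
  "permutation_matrix P \<longleftrightarrow> (\<exists>\<sigma>. \<sigma> permutes (UNIV :: 'n set) \<and> P = (\<chi> i j. if j = \<sigma> i then 1 else 0))"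

definition diag_mat :: "('n \<Rightarrow> real) \<Rightarrow> real^'n^'n" where
  "diag_mat d = (\<chi> i j. if i = j then d i else 0)"

definition hpnn2_equiv :: "nat \<Rightarrow> real^'d0^'d1 \<Rightarrow> real^'d1^'d2 \<Rightarrow> real^'d0^'d1 \<Rightarrow> real^'d1^'d2 \<Rightarrow> bool" where
  "hpnn2_equiv r W1 W2 W1' W2' \<longleftrightarrow>
     (\<exists>P d. permutation_matrix P \<and> (\<forall>i. d i \<noteq> 0) \<and>
        W1' = P ** diag_mat d ** W1 \<and>
        W2' = W2 ** diag_mat (\<lambda>i. (inverse (d i)) ^ r) ** transpose P)"

definition hpnn2_unique :: "nat \<Rightarrow> real^'d0^'d1 \<Rightarrow> real^'d1^'d2 \<Rightarrow> bool" where
  "hpnn2_unique r W1 W2 \<longleftrightarrow>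
     (\<forall>(W1' :: real^'d0^'d1) (W2' :: real^'d1^'d2).
        hpnn2 r W1' W2' = hpnn2 r W1 W2 \<longrightarrow> hpnn2_equiv r W1 W2 W1' W2')"

definition cols_indep :: "real^'n^'m \<Rightarrow> 'n set \<Rightarrow> bool" where
  "cols_indep A S \<longleftrightarrow> (\<forall>c. (\<Sum>j\<in>S. c j *s column j A) = 0 \<longrightarrow> (\<forall>j\<in>S. c j = 0))"

definition krank :: "real^'n^'m \<Rightarrow> nat" where
  "krank A = Max {k. k \<le> CARD('n) \<and> (\<forall>S :: 'n set. card S = k \<longrightarrow> cols_indep A S)}"

end

theory Submission
  imports Defs
begin

text \<open>For every output, equality of the two networks says that two sums of \<open>r\<close>-th powers of
  linear forms agree, \<open>\<Sum>\<^sub>i A\<^sub>k\<^sub>i (u\<^sub>i \<bullet> x)\<^sup>r = \<Sum>\<^sub>j B\<^sub>k\<^sub>j (v\<^sub>j \<bullet> x)\<^sup>r\<close>, where the \<open>u\<^sub>i\<close>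
  and \<open>v\<^sub>j\<close> are the rows of \<open>W\<^sub>1\<close> and \<open>W\<^sub>1'\<close>; by polarization the associated symmetric
  \<open>r\<close>-linear forms agree as well. Any \<open>k = krank (W\<^sub>1\<^sup>T)\<close> of the \<open>u\<^sub>i\<close> are independent,
  hence products of \<open>s\<close> linear forms \<open>u\<^sub>i \<bullet> X\<^sub>l\<close> are linearly independent for up to
  \<open>s (k - 1) + 1\<close> indices \<open>i\<close>. Feeding into one argument a vector orthogonal to the span \<open>L\<close>
  of \<open>k - 1\<close> of the \<open>v\<^sub>j\<close> and splitting the other \<open>r - 1 \<ge> 2 s\<close> arguments into two groups
  turns the identity into an equality of matrices; comparing ranks shows that \<open>L\<close> contains
  at least as many \<open>u\<^sub>i\<close> as \<open>v\<^sub>j\<close>, and this is where the lower bound on \<open>r\<close> is needed.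
  Kruskal's permutation lemma then yields \<open>v\<^sub>j = c\<^sub>j u\<^bsub>\<sigma> j\<^esub>\<close>, and the independence of
  the products of linear forms identifies \<open>W\<^sub>2'\<close>.\<close>

definition coord_subspace :: "'i::finite set \<Rightarrow> (real^'i) set" where
  "coord_subspace T = {x. \<forall>i. i \<notin> T \<longrightarrow> x $ i = 0}"

lemma dim_coord_subspace: "dim (coord_subspace T) = card T"
  unfolding coord_subspace_def dim_vec_eq[symmetric] by (rule dim_substandard_cart)

lemma subspace_coord_subspace: "subspace (coord_subspace T)"
  unfolding coord_subspace_def subspace_def by auto

lemma dim_subspace_eq_dim_image_add_dim_kernel:
  fixes f :: "'a::euclidean_space \<Rightarrow> 'b::euclidean_space"
  assumes lf: "linear f" and G: "subspace G"
  shows "dim G = dim (f ` G) + dim (G \<inter> {x. f x = 0})"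
proof -
  define N where "N = G \<inter> {x. f x = 0}"
  define M where "M = {y \<in> G. \<forall>x\<in>N. orthogonal x y}"
  have subN: "subspace N" unfolding N_def
    using G lf by (auto simp: subspace_def linear_add linear_0 linear_cmul)
  have subM: "subspace M"
    unfolding M_def subspace_def using G by (auto simp: subspace_def orthogonal_clauses)
  have dim_MN: "dim M + dim N = dim G" unfolding M_def
    using dim_subspace_orthogonal_to_vectors[OF subN G] N_def by auto
  have fMG: "f ` M = f ` G"
  proof
    show "f ` M \<subseteq> f ` G" unfolding M_def by auto
    show "f ` G \<subseteq> f ` M"
    proof
      fix w assume "w \<in> f ` G"
      then obtain g where g: "g \<in> G" "w = f g" by auto
      obtain y z where yz: "y \<in> span N" "\<And>x. x \<in> span N \<Longrightarrow> orthogonal z x" "g = y + z"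
        using orthogonal_subspace_decomp_exists[of N g] by metis
      have "y \<in> N" using yz(1) subN by (metis span_eq_iff)
      then have "y \<in> G" "f y = 0" unfolding N_def by auto
      then have "z \<in> G" using g yz(3) G by (metis add_diff_cancel_left' subspace_diff)
      then have "z \<in> M" unfolding M_def using yz(2) span_base orthogonal_commute by blast
      moreover have "f g = f z" using yz(3) \<open>f y = 0\<close> linear_add[OF lf] by simp
      ultimately show "w \<in> f ` M" using g by auto
    qed
  qed
  have "inj_on f M"
  proof (rule inj_onI)
    fix a b assume ab: "a \<in> M" "b \<in> M" "f a = f b"
    have "a - b \<in> M" using subM ab by (simp add: subspace_diff)
    moreover have "f (a - b) = 0" using ab linear_diff[OF lf] by simp
    ultimately have "a - b \<in> N" "orthogonal (a - b) (a - b)" unfolding M_def N_def by auto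
    then show "a = b" by (simp add: orthogonal_def)
  qed
  then have "dim (f ` M) = dim M"
    using dim_image_eq[OF lf] subM by (metis span_eq_iff)
  then show ?thesis using dim_MN fMG N_def by simp
qed

lemma card_le_dim_range_if_coordinates_independent:
  fixes f :: "'y \<Rightarrow> real^'i::finite"
  assumes indep: "\<And>c. \<forall>y. (\<Sum>i\<in>S. c i * f y $ i) = 0 \<Longrightarrow> \<forall>i\<in>S. c i = 0"
  shows "card S \<le> dim (range f)"
proof -
  define E where "E = (\<lambda>i. axis i (1::real)) ` (- S)"
  have spans: "span (range f \<union> E) = UNIV"
  proof (rule ccontr)
    assume "span (range f \<union> E) \<noteq> UNIV"
    then obtain x :: "real^'i" where x: "x \<noteq> 0" "\<And>y. y \<in> span (range f \<union> E) \<Longrightarrow> x \<bullet> y = 0"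
      using orthogonal_to_subspace_exists_gen[of "range f \<union> E" UNIV]
      by (auto simp: orthogonal_def)
    have outside: "x $ i = 0" if "i \<notin> S" for i
      using x(2)[of "axis i 1"] that by (auto simp: E_def inner_axis intro: span_base)
    have "(\<Sum>i\<in>S. x $ i * f y $ i) = 0" for y
    proof -
      have "(\<Sum>i\<in>S. x $ i * f y $ i) = x \<bullet> f y"
        unfolding inner_vec_def inner_real_def using outside
        by (intro sum.mono_neutral_left) auto
      also have "\<dots> = 0" by (rule x(2)) (auto intro: span_base)
      finally show ?thesis .
    qed
    then have "\<forall>i\<in>S. x $ i = 0" using indep by blast
    then have "x = 0" using outside by (auto simp: vec_eq_iff)
    then show False using x(1) by simp
  qed
  have "CARD('i) \<le> dim (range f) + dim E"
  proof -
    have "CARD('i) = dim {x + y |x y. x \<in> span (range f) \<and> y \<in> span E}"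
      using spans dim_coord_subspace[of UNIV] by (simp add: span_Un coord_subspace_def)
    also have "\<dots> \<le> dim (span (range f)) + dim (span E)"
      using dim_sums_Int[of "span (range f)" "span E"] by simp
    finally show ?thesis by simp
  qed
  moreover have "dim E \<le> card (- S)"
  proof -
    have "dim E \<le> card E" using dim_le_card[of E E] span_superset[of E] by (simp add: E_def)
    also have "card E \<le> card (- S)" unfolding E_def by (rule card_image_le) simp
    finally show ?thesis .
  qed
  moreover have "card (- S) = CARD('i) - card S"
    using card_Diff_subset[of S UNIV] by (simp add: Compl_eq_Diff_UNIV)
  ultimately show ?thesis using card_mono[of UNIV S] by simp
qed

lemma dim_add_card_le_if_inter_coord_subspace_trivial:
  assumes V: "subspace V" "V \<subseteq> coord_subspace S"
    and R: "R \<subseteq> S" "V \<inter> coord_subspace R \<subseteq> {0}"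
  shows "dim V + card R \<le> card S"
proof -
  let ?W = "{x + y |x y. x \<in> V \<and> y \<in> coord_subspace R}"
  have "0 \<in> V \<inter> coord_subspace R"
    using subspace_0[OF V(1)] subspace_0[OF subspace_coord_subspace] by blast
  then have "V \<inter> coord_subspace R = {0}" using R(2) by blast
  moreover have "?W \<subseteq> coord_subspace S"
  proof
    fix w assume "w \<in> ?W"
    then obtain x y where "w = x + y" "x \<in> coord_subspace S" "y \<in> coord_subspace R"
      using V(2) by blast
    then show "w \<in> coord_subspace S" using R(1) unfolding coord_subspace_def by auto
  qed
  then have "dim ?W \<le> card S"
    using dim_subset[of ?W "coord_subspace S"] dim_coord_subspace[of S] by linarith
  moreover have "dim ?W + dim (V \<inter> coord_subspace R) = dim V + card R"
    using dim_sums_Int[OF V(1) subspace_coord_subspace, of R] dim_coord_subspace[of R] by simp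
  ultimately show ?thesis by simp
qed

text \<open>The kernel of \<open>snd\<close> on \<open>G\<close> embeds into the vectors supported on \<open>S\<close> that annihilate
  every \<open>a X\<close>; these meet the coordinates \<open>SA\<close> trivially. Conclude by rank-nullity.\<close>

lemma dim_add_card_le_if_compatible_pairs:
  fixes G :: "((real^'i::finite) \<times> (real^'i)) set" and a a' :: "'x \<Rightarrow> real^'i"
  assumes G: "subspace G" "fst ` G \<subseteq> coord_subspace S"
    and compat: "G \<subseteq> {g. \<forall>X. fst g \<bullet> a X = snd g \<bullet> a' X}"
    and SA: "SA \<subseteq> S" "\<And>c. \<forall>X. (\<Sum>i\<in>SA. c i * a X $ i) = 0 \<Longrightarrow> \<forall>i\<in>SA. c i = 0"
  shows "dim G + card SA \<le> dim (snd ` G) + card S"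
proof -
  define K where "K = {c. \<forall>X. c \<bullet> a X = 0}"
  define Z where "Z = G \<inter> {g. snd g = 0}"
  have "dim G = dim (snd ` G) + dim Z"
    unfolding Z_def by (rule dim_subspace_eq_dim_image_add_dim_kernel[OF linear_snd G(1)])
  moreover have "dim Z \<le> dim (K \<inter> coord_subspace S)"
  proof -
    have "Z \<subseteq> (\<lambda>w. (w, 0)) ` (fst ` Z)"
    proof
      fix g assume "g \<in> Z"
      moreover have "g = (fst g, 0)" using \<open>g \<in> Z\<close> unfolding Z_def by (cases g) simp
      ultimately show "g \<in> (\<lambda>w. (w, 0)) ` (fst ` Z)" by blast
    qed
    moreover have "linear (\<lambda>w::real^'i. (w, 0::real^'i))" by (simp add: linear_iff)
    ultimately have "dim Z \<le> dim (fst ` Z)"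
      using dim_subset dim_image_le order_trans by metis
    moreover have "fst ` Z \<subseteq> K \<inter> coord_subspace S"
      using G(2) compat unfolding Z_def K_def by fastforce
    ultimately show ?thesis using dim_subset order_trans by metis
  qed
  moreover have "dim (K \<inter> coord_subspace S) + card SA \<le> card S"
  proof (rule dim_add_card_le_if_inter_coord_subspace_trivial)
    have "subspace K"
      using subspace_orthogonal_to_vectors[of "range a"]
      unfolding K_def orthogonal_def by (simp add: inner_commute)
    then show "subspace (K \<inter> coord_subspace S)" by (simp add: subspace_inter subspace_coord_subspace)
    show "K \<inter> coord_subspace S \<inter> coord_subspace SA \<subseteq> {0}"
    proof
      fix x assume x: "x \<in> K \<inter> coord_subspace S \<inter> coord_subspace SA"
      have "(\<Sum>i\<in>SA. x $ i * a X $ i) = x \<bullet> a X" for X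
        unfolding inner_vec_def inner_real_def using x
        by (intro sum.mono_neutral_left) (auto simp: coord_subspace_def)
      then have "\<forall>i\<in>SA. x $ i = 0" using x SA(2)[of "\<lambda>i. x $ i"] by (simp add: K_def)
      then show "x \<in> {0}" using x by (auto simp: vec_eq_iff coord_subspace_def)
    qed
  qed (use SA(1) in auto)
  ultimately show ?thesis by linarith
qed

text \<open>Take for \<open>G\<close> the span of the coefficient pairs of the slices at fixed \<open>Y\<close>; its first
  projection has dimension at least \<open>|SB|\<close> because the \<open>\<beta>\<^sub>i\<close>, \<open>i \<in> SB\<close>, are independent.\<close>

lemma separable_sum_rank_bound:
  fixes al al' :: "'i::finite \<Rightarrow> 'x \<Rightarrow> real" and be be' :: "'i \<Rightarrow> 'y \<Rightarrow> real"
    and d d' :: "'i \<Rightarrow> real"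
  assumes eq: "\<And>X Y. (\<Sum>i\<in>UNIV. d i * al i X * be i Y) = (\<Sum>i\<in>UNIV. d' i * al' i X * be' i Y)"
    and SA: "SA \<subseteq> {i. d i \<noteq> 0}" "\<And>c. \<forall>X. (\<Sum>i\<in>SA. c i * al i X) = 0 \<Longrightarrow> \<forall>i\<in>SA. c i = 0"
    and SB: "SB \<subseteq> {i. d i \<noteq> 0}" "\<And>c. \<forall>Y. (\<Sum>i\<in>SB. c i * be i Y) = 0 \<Longrightarrow> \<forall>i\<in>SB. c i = 0"
  shows "card SA + card SB \<le> card {i. d i \<noteq> 0} + card {i. d' i \<noteq> 0}"
proof -
  define a where "a = (\<lambda>X. (\<chi> i. al i X) :: real^'i)"
  define a' where "a' = (\<lambda>X. (\<chi> i. al' i X) :: real^'i)"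
  define b where "b = (\<lambda>Y. (\<chi> i. d i * be i Y) :: real^'i)"
  define b' where "b' = (\<lambda>Y. (\<chi> i. d' i * be' i Y) :: real^'i)"
  define G where "G = span (range (\<lambda>Y. (b Y, b' Y)))"
  have "fst ` G = span (fst ` range (\<lambda>Y. (b Y, b' Y)))"
    and "snd ` G = span (snd ` range (\<lambda>Y. (b Y, b' Y)))"
    unfolding G_def by (simp_all add: linear_span_image linear_fst linear_snd)
  then have fst_G: "fst ` G = span (range b)" and snd_G: "snd ` G = span (range b')"
    by (simp_all add: image_image)
  have "card SB \<le> dim (range b)"
  proof (rule card_le_dim_range_if_coordinates_independent)
    fix c assume "\<forall>Y. (\<Sum>i\<in>SB. c i * b Y $ i) = 0"
    then have "\<forall>i\<in>SB. c i * d i = 0"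
      using SB(2)[of "\<lambda>i. c i * d i"] unfolding b_def by (simp add: mult.assoc)
    then show "\<forall>i\<in>SB. c i = 0" using SB(1) by auto
  qed
  also have "dim (range b) \<le> dim G"
    using dim_image_le[OF linear_fst, of G] fst_G by simp
  finally have "card SB \<le> dim G" .
  moreover have "dim G + card SA \<le> dim (snd ` G) + card {i. d i \<noteq> 0}"
  proof (rule dim_add_card_le_if_compatible_pairs)
    show "subspace G" by (simp add: G_def)
    show "fst ` G \<subseteq> coord_subspace {i. d i \<noteq> 0}"
      unfolding fst_G
      by (rule span_minimal[OF _ subspace_coord_subspace]) (auto simp: b_def coord_subspace_def)
    show "G \<subseteq> {g. \<forall>X. fst g \<bullet> a X = snd g \<bullet> a' X}"
      unfolding G_def
    proof (rule span_minimal)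
      show "subspace {g. \<forall>X. fst g \<bullet> a X = snd g \<bullet> a' X}"
        by (simp add: subspace_def inner_add_left)
      have "b Y \<bullet> a X = b' Y \<bullet> a' X" for X Y
        using eq[of X Y] unfolding a_def a'_def b_def b'_def inner_vec_def inner_real_def
        by (simp add: ac_simps)
      then show "range (\<lambda>Y. (b Y, b' Y)) \<subseteq> {g. \<forall>X. fst g \<bullet> a X = snd g \<bullet> a' X}" by auto
    qed
  qed (use SA in \<open>auto simp: a_def\<close>)
  moreover have "dim (snd ` G) \<le> card {i. d' i \<noteq> 0}"
  proof -
    have "span (range b') \<subseteq> coord_subspace {i. d' i \<noteq> 0}"
      by (rule span_minimal[OF _ subspace_coord_subspace]) (auto simp: b'_def coord_subspace_def)
    then show ?thesis using snd_G dim_subset dim_coord_subspace by metis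
  qed
  ultimately show ?thesis by linarith
qed

definition kruskal_indep :: "('i::finite \<Rightarrow> 'a::euclidean_space) \<Rightarrow> nat \<Rightarrow> bool" where
  "kruskal_indep u k \<longleftrightarrow>
     (\<forall>T c. card T \<le> k \<longrightarrow> (\<Sum>j\<in>T. c j *\<^sub>R u j) = 0 \<longrightarrow> (\<forall>j\<in>T. c j = 0))"

lemma kruskal_indepD:
  assumes "kruskal_indep u k" "card T \<le> k" "(\<Sum>j\<in>T. c j *\<^sub>R u j) = 0" "j \<in> T"
  shows "c j = 0"
  using assms unfolding kruskal_indep_def by blast

lemma kruskal_indep_inj:
  assumes u: "kruskal_indep u k" and k: "2 \<le> k"
  shows "inj u"
proof (rule injI)
  fix i j assume eq: "u i = u j"
  show "i = j"
  proof (rule ccontr)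
    assume ne: "i \<noteq> j"
    define c where "c = (\<lambda>x. if x = i then (1::real) else -1)"
    have "(\<Sum>x\<in>{i, j}. c x *\<^sub>R u x) = 0" using ne eq unfolding c_def by simp
    then have "c i = 0" using kruskal_indepD[OF u, of "{i, j}"] ne k by simp
    then show False unfolding c_def by simp
  qed
qed

lemma kruskal_indep_nonzero:
  assumes "kruskal_indep u k" "1 \<le> k"
  shows "u i \<noteq> 0"
  using kruskal_indepD[OF assms(1), of "{i}" "\<lambda>_. 1" i] assms(2) by auto

lemma kruskal_indep_independent_image:
  assumes u: "kruskal_indep u k" and k: "2 \<le> k" and T: "card T \<le> k"
  shows "independent (u ` T)"
proof -
  have inj: "inj u" by (rule kruskal_indep_inj[OF u k])
  have "\<forall>c. (\<Sum>v\<in>u ` T. c v *\<^sub>R v) = 0 \<longrightarrow> (\<forall>v\<in>u ` T. c v = 0)"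
  proof (intro allI impI ballI)
    fix c v assume "(\<Sum>v\<in>u ` T. c v *\<^sub>R v) = 0" "v \<in> u ` T"
    moreover have "(\<Sum>v\<in>u ` T. c v *\<^sub>R v) = (\<Sum>j\<in>T. c (u j) *\<^sub>R u j)"
      using inj by (simp add: sum.reindex inj_on_def)
    ultimately show "c v = 0" using kruskal_indepD[OF u T, of "\<lambda>j. c (u j)"] by auto
  qed
  then show ?thesis by (simp add: independent_explicit)
qed

lemma kruskal_indep_not_in_span:
  assumes u: "kruskal_indep u k" and k: "2 \<le> k" and G: "card G < k" "i \<notin> G"
  shows "u i \<notin> span (u ` G)"
proof
  assume "u i \<in> span (u ` G)"
  then obtain c where "u i = (\<Sum>w\<in>u ` G. c w *\<^sub>R w)"
    using span_finite[of "u ` G"] by auto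
  then have c: "u i = (\<Sum>j\<in>G. c (u j) *\<^sub>R u j)"
    using kruskal_indep_inj[OF u k] by (simp add: sum.reindex inj_on_def)
  define c' where "c' = (\<lambda>j. if j = i then (-1::real) else c (u j))"
  have "(\<Sum>j\<in>G. c' j *\<^sub>R u j) = (\<Sum>j\<in>G. c (u j) *\<^sub>R u j)"
    using G(2) unfolding c'_def by (intro sum.cong) auto
  then have "(\<Sum>j\<in>insert i G. c' j *\<^sub>R u j) = 0"
    using G(2) c unfolding c'_def by simp
  then have "c' i = 0"
    using kruskal_indepD[OF u, of "insert i G"] G by (simp add: card_insert_if)
  then show False unfolding c'_def by simp
qed

lemma card_in_span_le_dim:
  assumes u: "kruskal_indep u k" and k: "2 \<le> k" and A: "dim A < k"
  shows "card {i. u i \<in> span A} \<le> dim A"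
proof (rule ccontr)
  assume "\<not> ?thesis"
  then obtain T where T: "T \<subseteq> {i. u i \<in> span A}" "card T = dim A + 1"
    using obtain_subset_with_card_n[of "dim A + 1" "{i. u i \<in> span A}"] by auto
  have "independent (u ` T)"
    using kruskal_indep_independent_image[OF u k] T A by simp
  moreover have "u ` T \<subseteq> span A" using T(1) by auto
  ultimately have "card (u ` T) \<le> dim (span A)"
    using independent_card_le_dim by blast
  moreover have "card (u ` T) = card T"
    using kruskal_indep_inj[OF u k] by (simp add: card_image inj_on_def inj_def)
  ultimately show False using T by simp
qed

section \<open>Products of linear forms\<close>

lemma exists_normal_vector_avoiding:
  fixes L F :: "'a::euclidean_space set"
  assumes L: "subspace L" and F: "finite F" "\<forall>w\<in>F. w \<notin> L"
  obtains y where "\<forall>x\<in>L. x \<bullet> y = 0" "\<forall>w\<in>F. w \<bullet> y \<noteq> 0"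
proof -
  have "\<exists>y. (\<forall>x\<in>L. x \<bullet> y = 0) \<and> (\<forall>w\<in>F. w \<bullet> y \<noteq> 0)"
    using F
  proof (induction F rule: finite_induct)
    case empty
    show ?case by (rule exI[of _ 0]) simp
  next
    case (insert w F)
    then obtain y where y: "\<forall>x\<in>L. x \<bullet> y = 0" "\<forall>w\<in>F. w \<bullet> y \<noteq> 0" by auto
    obtain p z where pz: "p \<in> span L" "\<And>x. x \<in> span L \<Longrightarrow> orthogonal z x" "w = p + z"
      using orthogonal_subspace_decomp_exists[of L w] by metis
    have z: "x \<bullet> z = 0" if "x \<in> L" for x
      using pz(2)[OF span_base[OF that]] by (simp add: orthogonal_def inner_commute)
    have "p \<in> L" using pz(1) L by (metis span_eq_iff)
    then have "w \<bullet> z = z \<bullet> z"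
      using z[of p] pz(3) by (simp add: inner_add_left)
    moreover have "z \<noteq> 0" using pz(3) \<open>p \<in> L\<close> insert.prems by auto
    ultimately have wz: "w \<bullet> z \<noteq> 0" by simp
    \<comment> \<open>Move \<open>y\<close> along \<open>z\<close> by an amount avoiding the finitely many values that create a zero.\<close>
    define bad where "bad = (\<lambda>w'. - (w' \<bullet> y) / (w' \<bullet> z)) ` insert w F"
    have "finite bad" unfolding bad_def using insert.hyps(1) by simp
    then obtain t :: real where t: "t \<notin> bad" using ex_new_if_finite[OF infinite_UNIV_char_0] by blast
    have "w' \<bullet> (y + t *\<^sub>R z) \<noteq> 0" if w': "w' \<in> insert w F" for w'
    proof (cases "w' \<bullet> z = 0")
      case True
      then have "w' \<in> F" using w' wz by auto
      then show ?thesis using True y(2) by (simp add: inner_add_right)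
    next
      case False
      have "t \<noteq> - (w' \<bullet> y) / (w' \<bullet> z)" using t w' unfolding bad_def by blast
      then show ?thesis using False by (simp add: inner_add_right field_simps)
    qed
    moreover have "\<forall>x\<in>L. x \<bullet> (y + t *\<^sub>R z) = 0" using y(1) z by (simp add: inner_add_right)
    ultimately show ?case by blast
  qed
  then show ?thesis using that by blast
qed

lemma exists_prod_inner_vanishing_except:
  assumes u: "kruskal_indep u k" and k: "2 \<le> k"
  shows "i \<notin> T \<Longrightarrow> card T \<le> m * (k - 1) \<Longrightarrow>
    \<exists>X. (\<forall>j\<in>T. (\<Prod>l<m. u j \<bullet> X l) = 0) \<and> (\<Prod>l<m. u i \<bullet> X l) \<noteq> 0"
proof (induction m arbitrary: T)
  case 0
  then show ?case by auto
next
  case (Suc m)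
  \<comment> \<open>Up to \<open>k - 1\<close> of the \<open>u j\<close> are killed by one vector orthogonal to them but not to \<open>u i\<close>.\<close>
  obtain G where G: "G \<subseteq> T" "card G = min (card T) (k - 1)"
    using obtain_subset_with_card_n[of "min (card T) (k - 1)" T] by auto
  have "finite T" by simp
  then have "card (T - G) \<le> m * (k - 1)"
    using G Suc.prems k by (simp add: card_Diff_subset finite_subset min_def) linarith
  then obtain X where X: "\<forall>j\<in>T - G. (\<Prod>l<m. u j \<bullet> X l) = 0" "(\<Prod>l<m. u i \<bullet> X l) \<noteq> 0"
    using Suc.IH[of "T - G"] Suc.prems by auto
  have "card G < k" using G(2) k by simp
  moreover have "i \<notin> G" using G(1) Suc.prems(1) by blast
  ultimately have "u i \<notin> span (u ` G)" by (rule kruskal_indep_not_in_span[OF u k])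
  then obtain z where z: "\<forall>x\<in>span (u ` G). x \<bullet> z = 0" "\<forall>w\<in>{u i}. w \<bullet> z \<noteq> 0"
    using exists_normal_vector_avoiding[of "span (u ` G)" "{u i}"] by auto
  have prod_Suc: "(\<Prod>l<Suc m. u j \<bullet> (X(m := z)) l) = (\<Prod>l<m. u j \<bullet> X l) * (u j \<bullet> z)" for j
    by (simp add: prod.lessThan_Suc)
  have "\<forall>j\<in>T. (\<Prod>l<Suc m. u j \<bullet> (X(m := z)) l) = 0"
  proof
    fix j assume j: "j \<in> T"
    show "(\<Prod>l<Suc m. u j \<bullet> (X(m := z)) l) = 0"
    proof (cases "j \<in> G")
      case True
      then have "u j \<bullet> z = 0" using z(1) by (simp add: span_base)
      then show ?thesis by (simp add: prod_Suc)
    next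
      case False
      then show ?thesis using X(1) j by (simp add: prod_Suc)
    qed
  qed
  moreover have "(\<Prod>l<Suc m. u i \<bullet> (X(m := z)) l) \<noteq> 0"
    unfolding prod_Suc using X(2) z(2) by simp
  ultimately show ?case by blast
qed

lemma prod_inner_independent:
  assumes u: "kruskal_indep u k" and k: "2 \<le> k" and T: "card T \<le> m * (k - 1) + 1"
    and c: "\<forall>X. (\<Sum>i\<in>T. c i * (\<Prod>l<m. u i \<bullet> X l)) = 0"
  shows "\<forall>i\<in>T. c i = 0"
proof
  fix i assume i: "i \<in> T"
  have "card (T - {i}) \<le> m * (k - 1)" using T i by (simp add: card_Diff_singleton)
  then obtain X where X: "\<forall>j\<in>T - {i}. (\<Prod>l<m. u j \<bullet> X l) = 0" "(\<Prod>l<m. u i \<bullet> X l) \<noteq> 0"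
    using exists_prod_inner_vanishing_except[OF u k, of i "T - {i}" m] by auto
  have "(\<Sum>j\<in>T - {i}. c j * (\<Prod>l<m. u j \<bullet> X l)) = 0"
    by (intro sum.neutral ballI) (metis X(1) mult_zero_right)
  then have "(\<Sum>j\<in>T. c j * (\<Prod>l<m. u j \<bullet> X l)) = c i * (\<Prod>l<m. u i \<bullet> X l)"
    using i by (simp add: sum.remove)
  then show "c i = 0" using c X(2) by simp
qed

lemma weighted_prod_inner_independent:
  fixes A :: "'k \<Rightarrow> 'i::finite \<Rightarrow> real"
  assumes u: "kruskal_indep u k" and k: "2 \<le> k" and T: "card T \<le> m * (k - 1) + 1"
    and A: "\<And>i. \<exists>k'. A k' i \<noteq> 0"
    and c: "\<forall>Yk. (\<Sum>i\<in>T. c i * (A (snd Yk) i * (\<Prod>l<m. u i \<bullet> fst Yk l))) = 0"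
  shows "\<forall>i\<in>T. c i = 0"
proof
  fix i assume i: "i \<in> T"
  have "c i * A k' i = 0" for k'
  proof -
    have "\<forall>Y. (\<Sum>i\<in>T. (c i * A k' i) * (\<Prod>l<m. u i \<bullet> Y l)) = 0"
      using c by (auto simp: ac_simps dest: spec[of _ "(_, k')"])
    then show ?thesis using prod_inner_independent[OF u k T, of "\<lambda>i. c i * A k' i"] i by blast
  qed
  moreover obtain k' where "A k' i \<noteq> 0" using A by blast
  ultimately show "c i = 0" by (metis mult_eq_0_iff)
qed

section \<open>Polarization and flattening\<close>

lemma power_sum_eq_imp_mixed_eq:
  fixes u v :: "'i::finite \<Rightarrow> 'a::real_inner" and a b :: "'i \<Rightarrow> real"
  assumes eq: "\<And>x. (\<Sum>i\<in>UNIV. a i * (u i \<bullet> x) ^ r) = (\<Sum>j\<in>UNIV. b j * (v j \<bullet> x) ^ r)"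
  shows "m \<le> r \<Longrightarrow> (\<Sum>i\<in>UNIV. a i * (\<Prod>l<m. u i \<bullet> X l) * (u i \<bullet> y) ^ (r - m))
          = (\<Sum>j\<in>UNIV. b j * (\<Prod>l<m. v j \<bullet> X l) * (v j \<bullet> y) ^ (r - m))"
proof (induction m arbitrary: X y)
  case 0
  then show ?case using eq by simp
next
  case (Suc m)
  \<comment> \<open>Differentiate the identity for \<open>m\<close> at \<open>y + t X\<^sub>m\<close> with respect to \<open>t\<close> at \<open>t = 0\<close>.\<close>
  define w where "w = X m"
  define gu where "gu = (\<lambda>t. \<Sum>i\<in>UNIV. a i * (\<Prod>l<m. u i \<bullet> X l) * ((u i \<bullet> y) + t * (u i \<bullet> w)) ^ (r - m))"
  define gv where "gv = (\<lambda>t. \<Sum>i\<in>UNIV. b i * (\<Prod>l<m. v i \<bullet> X l) * ((v i \<bullet> y) + t * (v i \<bullet> w)) ^ (r - m))"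
  have gu_gv: "gu = gv"
  proof
    fix t
    show "gu t = gv t"
      using Suc.IH[of X "y + t *\<^sub>R w"] Suc.prems unfolding gu_def gv_def
      by (simp add: inner_add_right)
  qed
  have du: "(gu has_real_derivative (\<Sum>i\<in>UNIV. a i * (\<Prod>l<m. u i \<bullet> X l) *
      (of_nat (r - m) * (u i \<bullet> y) ^ (r - m - 1) * (u i \<bullet> w)))) (at 0)"
    unfolding gu_def by (auto intro!: derivative_eq_intros) (auto intro!: sum.cong simp: ac_simps)
  have dv: "(gv has_real_derivative (\<Sum>i\<in>UNIV. b i * (\<Prod>l<m. v i \<bullet> X l) *
      (of_nat (r - m) * (v i \<bullet> y) ^ (r - m - 1) * (v i \<bullet> w)))) (at 0)"
    unfolding gv_def by (auto intro!: derivative_eq_intros) (auto intro!: sum.cong simp: ac_simps)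
  have "(\<Sum>i\<in>UNIV. a i * (\<Prod>l<m. u i \<bullet> X l) * (of_nat (r - m) * (u i \<bullet> y) ^ (r - m - 1) * (u i \<bullet> w)))
      = (\<Sum>i\<in>UNIV. b i * (\<Prod>l<m. v i \<bullet> X l) * (of_nat (r - m) * (v i \<bullet> y) ^ (r - m - 1) * (v i \<bullet> w)))"
    using DERIV_unique[OF du] dv gu_gv by simp
  then have "of_nat (r - m) * (\<Sum>i\<in>UNIV. a i * (\<Prod>l<Suc m. u i \<bullet> X l) * (u i \<bullet> y) ^ (r - Suc m))
      = of_nat (r - m) * (\<Sum>i\<in>UNIV. b i * (\<Prod>l<Suc m. v i \<bullet> X l) * (v i \<bullet> y) ^ (r - Suc m))"
    unfolding sum_distrib_left w_def by (simp add: ac_simps)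
  moreover have "(of_nat (r - m) :: real) \<noteq> 0" using Suc.prems by simp
  ultimately show ?case by simp
qed

lemma power_sum_eq_imp_multilinear_eq:
  fixes u v :: "'i::finite \<Rightarrow> 'a::real_inner" and a b :: "'i \<Rightarrow> real"
  assumes "\<And>x. (\<Sum>i\<in>UNIV. a i * (u i \<bullet> x) ^ r) = (\<Sum>j\<in>UNIV. b j * (v j \<bullet> x) ^ r)"
  shows "(\<Sum>i\<in>UNIV. a i * (\<Prod>l<r. u i \<bullet> Z l)) = (\<Sum>j\<in>UNIV. b j * (\<Prod>l<r. v j \<bullet> Z l))"
  using power_sum_eq_imp_mixed_eq[OF assms, of r Z 0] by simp

definition seq_splice :: "nat \<Rightarrow> (nat \<Rightarrow> 'a) \<Rightarrow> 'a \<Rightarrow> (nat \<Rightarrow> 'a) \<Rightarrow> nat \<Rightarrow> 'a" where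
  "seq_splice s X y Y l = (if l < s then X l else if l = s then y else Y (l - Suc s))"

lemma prod_seq_splice:
  fixes g :: "'a \<Rightarrow> 'b::comm_monoid_mult"
  shows "(\<Prod>l<Suc (s + q). g (seq_splice s X y Y l)) = (\<Prod>l<s. g (X l)) * g y * (\<Prod>l<q. g (Y l))"
proof (induction q)
  case 0
  have "(\<Prod>l<s. g (seq_splice s X y Y l)) = (\<Prod>l<s. g (X l))"
    by (intro prod.cong) (auto simp: seq_splice_def)
  then show ?case by (simp add: seq_splice_def)
next
  case (Suc q)
  have last: "seq_splice s X y Y (Suc (s + q)) = Y q" by (simp add: seq_splice_def)
  have "(\<Prod>l<Suc (s + Suc q). g (seq_splice s X y Y l))
      = (\<Prod>l<Suc (s + q). g (seq_splice s X y Y l)) * g (Y q)"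
    by (simp only: add_Suc_right prod.lessThan_Suc last)
  also have "\<dots> = (\<Prod>l<s. g (X l)) * g y * (\<Prod>l<q. g (Y l)) * g (Y q)"
    by (simp only: Suc.IH)
  also have "\<dots> = (\<Prod>l<s. g (X l)) * g y * (\<Prod>l<Suc q. g (Y l))"
    by (simp only: prod.lessThan_Suc mult.assoc)
  finally show ?case .
qed

text \<open>Fixing one argument of the symmetric tensor to \<open>y\<close> and splitting the others into
  groups of \<open>s\<close> and \<open>q\<close> gives a matrix whose rank is controlled by the supports
  of \<open>i \<mapsto> u\<^sub>i \<bullet> y\<close> and \<open>j \<mapsto> v\<^sub>j \<bullet> y\<close>.\<close>

lemma flattening_support_bound:
  fixes u v :: "'i::finite \<Rightarrow> 'a::euclidean_space" and A B :: "'k \<Rightarrow> 'i \<Rightarrow> real"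
  assumes u: "kruskal_indep u k" and k: "2 \<le> k" and A: "\<And>i. \<exists>k'. A k' i \<noteq> 0"
    and eq: "\<And>k' Z. (\<Sum>i\<in>UNIV. A k' i * (\<Prod>l<Suc (s + q). u i \<bullet> Z l))
                  = (\<Sum>j\<in>UNIV. B k' j * (\<Prod>l<Suc (s + q). v j \<bullet> Z l))"
    and sq: "s \<le> q"
  shows "2 * min (card {i. u i \<bullet> y \<noteq> 0}) (s * (k - 1) + 1)
           \<le> card {i. u i \<bullet> y \<noteq> 0} + card {j. v j \<bullet> y \<noteq> 0}"
proof -
  define al where "al = (\<lambda>i (X :: nat \<Rightarrow> 'a). \<Prod>l<s. u i \<bullet> X l)"
  define al' where "al' = (\<lambda>j (X :: nat \<Rightarrow> 'a). \<Prod>l<s. v j \<bullet> X l)"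
  define be where "be = (\<lambda>i (Yk :: (nat \<Rightarrow> 'a) \<times> 'k). A (snd Yk) i * (\<Prod>l<q. u i \<bullet> fst Yk l))"
  define be' where "be' = (\<lambda>j (Yk :: (nat \<Rightarrow> 'a) \<times> 'k). B (snd Yk) j * (\<Prod>l<q. v j \<bullet> fst Yk l))"
  have flat: "(\<Sum>i\<in>UNIV. (u i \<bullet> y) * al i X * be i Yk) = (\<Sum>j\<in>UNIV. (v j \<bullet> y) * al' j X * be' j Yk)"
    for X Yk
  proof -
    obtain Y k' where Yk: "Yk = (Y, k')" by (cases Yk)
    have "(\<Sum>i\<in>UNIV. (u i \<bullet> y) * al i X * be i Yk)
        = (\<Sum>i\<in>UNIV. A k' i * (\<Prod>l<Suc (s + q). u i \<bullet> seq_splice s X y Y l))"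
      unfolding prod_seq_splice al_def be_def Yk by (intro sum.cong) (simp_all add: ac_simps)
    also have "\<dots> = (\<Sum>j\<in>UNIV. B k' j * (\<Prod>l<Suc (s + q). v j \<bullet> seq_splice s X y Y l))"
      by (rule eq)
    also have "\<dots> = (\<Sum>j\<in>UNIV. (v j \<bullet> y) * al' j X * be' j Yk)"
      unfolding prod_seq_splice al'_def be'_def Yk by (intro sum.cong) (simp_all add: ac_simps)
    finally show ?thesis .
  qed
  obtain S where S: "S \<subseteq> {i. u i \<bullet> y \<noteq> 0}"
    "card S = min (card {i. u i \<bullet> y \<noteq> 0}) (s * (k - 1) + 1)"
    by (meson min.cobounded1 obtain_subset_with_card_n)
  have "s * (k - 1) \<le> q * (k - 1)" using sq by (rule mult_le_mono1)
  moreover have card_S: "card S \<le> s * (k - 1) + 1" using S(2) by simp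
  ultimately have card_S': "card S \<le> q * (k - 1) + 1" by linarith
  have "card S + card S \<le> card {i. u i \<bullet> y \<noteq> 0} + card {j. v j \<bullet> y \<noteq> 0}"
  proof (rule separable_sum_rank_bound[where d = "\<lambda>i. u i \<bullet> y" and d' = "\<lambda>j. v j \<bullet> y"])
    show "(\<Sum>i\<in>UNIV. (u i \<bullet> y) * al i X * be i Yk) = (\<Sum>j\<in>UNIV. (v j \<bullet> y) * al' j X * be' j Yk)"
      for X Yk by (rule flat)
    show "\<forall>i\<in>S. c i = 0" if "\<forall>X. (\<Sum>i\<in>S. c i * al i X) = 0" for c
      using prod_inner_independent[OF u k card_S] that unfolding al_def by blast
    show "\<forall>i\<in>S. c i = 0" if "\<forall>Yk. (\<Sum>i\<in>S. c i * be i Yk) = 0" for c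
      using weighted_prod_inner_independent[where A = A, OF u k card_S' A] that
      unfolding be_def by blast
  qed (use S(1) in auto)
  then show ?thesis using S(2) by simp
qed

lemma card_in_span_le:
  fixes u v :: "'i::finite \<Rightarrow> 'a::euclidean_space" and A B :: "'k \<Rightarrow> 'i \<Rightarrow> real"
  assumes u: "kruskal_indep u k" and k: "2 \<le> k" and A: "\<And>i. \<exists>k'. A k' i \<noteq> 0"
    and eq: "\<And>k' Z. (\<Sum>i\<in>UNIV. A k' i * (\<Prod>l<Suc (s + q). u i \<bullet> Z l))
                  = (\<Sum>j\<in>UNIV. B k' j * (\<Prod>l<Suc (s + q). v j \<bullet> Z l))"
    and sq: "s \<le> q" and n: "2 * CARD('i) \<le> 2 * (s * (k - 1)) + k"
    and T: "card T = k - 1"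
  shows "card {j. v j \<in> span (v ` T)} \<le> card {i. u i \<in> span (v ` T)}"
proof -
  define L where "L = span (v ` T)"
  obtain y where y: "\<forall>x\<in>L. x \<bullet> y = 0" "\<forall>w\<in>u ` {i. u i \<notin> L} \<union> v ` {j. v j \<notin> L}. w \<bullet> y \<noteq> 0"
    by (rule exists_normal_vector_avoiding[of L "u ` {i. u i \<notin> L} \<union> v ` {j. v j \<notin> L}"])
      (auto simp: L_def)
  have "{i. u i \<bullet> y \<noteq> 0} = UNIV - {i. u i \<in> L}" "{j. v j \<bullet> y \<noteq> 0} = UNIV - {j. v j \<in> L}"
    using y by auto
  then have "card {i. u i \<bullet> y \<noteq> 0} = CARD('i) - card {i. u i \<in> L}"
    and "card {j. v j \<bullet> y \<noteq> 0} = CARD('i) - card {j. v j \<in> L}"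
    by (simp_all add: card_Diff_subset)
  moreover have "card {i. u i \<in> L} \<le> CARD('i)" "card {j. v j \<in> L} \<le> CARD('i)"
    by (simp_all add: card_mono)
  moreover have "k - 1 \<le> card {j. v j \<in> L}"
    using T card_mono[of "{j. v j \<in> L}" T] by (force simp: L_def intro: span_base)
  moreover have "2 * min (card {i. u i \<bullet> y \<noteq> 0}) (s * (k - 1) + 1)
      \<le> card {i. u i \<bullet> y \<noteq> 0} + card {j. v j \<bullet> y \<noteq> 0}"
    by (rule flattening_support_bound[OF u k A eq sq])
  ultimately have "card {j. v j \<in> L} \<le> card {i. u i \<in> L}"
    using n k by (cases "CARD('i) - card {i. u i \<in> L} \<le> s * (k - 1) + 1") (simp_all add: min_def)
  then show ?thesis unfolding L_def .
qed

section \<open>Kruskal's permutation lemma\<close>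

lemma dim_span_image_subset:
  fixes v :: "'i \<Rightarrow> 'a::euclidean_space"
  assumes "dim (span (v ` T)) = card T" "S \<subseteq> T" "finite T"
  shows "dim (span (v ` S)) = card S"
proof -
  have "dim (v ` T) \<le> card (v ` T)"
    using dim_le_card[of "v ` T" "v ` T"] span_superset[of "v ` T"] assms(3) by simp
  moreover have "card (v ` T) \<le> card T" by (rule card_image_le) fact
  ultimately have "card (v ` T) = card T" "dim (v ` T) = card (v ` T)"
    using assms(1) by simp_all
  then have "inj_on v T" "independent (v ` T)"
    using eq_card_imp_inj_on[OF assms(3)] card_eq_dim[of "v ` T" "v ` T"] span_superset[of "v ` T"]
    by (auto simp: assms(3))
  then have "independent (v ` S)" "card (v ` S) = card S"
    using assms(2) independent_mono[of "v ` T" "v ` S"] card_image[of v S] inj_on_subset[of v T S]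
    by auto
  then show ?thesis by (simp add: dim_eq_card_independent)
qed

lemma in_span_if_in_distinct_extensions:
  fixes P L L' :: "'a::euclidean_space set"
  assumes L: "subspace L" "P \<subseteq> L" "dim L \<le> dim P + 1"
    and L': "subspace L'" "P \<subseteq> L'" "dim L' \<le> dim P + 1"
    and "L \<noteq> L'" "x \<in> L" "x \<in> L'"
  shows "x \<in> span P"
proof (rule ccontr)
  assume x: "x \<notin> span P"
  have "M = span (insert x P)" if "subspace M" "P \<subseteq> M" "dim M \<le> dim P + 1" "x \<in> M" for M
  proof (rule subspace_dim_equal[symmetric])
    show "span (insert x P) \<subseteq> M" using that by (simp add: span_minimal)
    show "dim M \<le> dim (span (insert x P))" using that(3) x by (simp add: dim_insert)
  qed (use that in simp_all)
  then have "L = L'" using L L' assms(8,9) by metis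
  then show False using \<open>L \<noteq> L'\<close> by simp
qed

lemma card_core_ge_if_pairwise_inter_subset:
  fixes U :: "'b \<Rightarrow> 'a::finite set"
  assumes B: "finite B" "card B = CARD('a) - m + 1" and m: "m < CARD('a)"
    and U: "\<And>b. b \<in> B \<Longrightarrow> Q \<subseteq> U b \<and> card (U b) = m"
    and inter: "\<And>b b'. b \<in> B \<Longrightarrow> b' \<in> B \<Longrightarrow> b \<noteq> b' \<Longrightarrow> U b \<inter> U b' \<subseteq> Q"
  shows "m - 1 \<le> card Q"
proof (rule ccontr)
  assume "\<not> ?thesis"
  have "B \<noteq> {}" using B(2) by auto
  then obtain b0 where "b0 \<in> B" by blast
  then have "card Q \<le> m" using U card_mono[of "U b0" Q] by auto
  define t where "t = m - card Q"
  have t: "2 \<le> t" using \<open>\<not> m - 1 \<le> card Q\<close> unfolding t_def by linarith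
  have "card (U b - Q) = t" if "b \<in> B" for b
    using U[OF that] by (simp add: card_Diff_subset t_def)
  then have "card B * t = (\<Sum>b\<in>B. card (U b - Q))" by simp
  also have "\<dots> = card (\<Union>b\<in>B. U b - Q)"
    using B(1) inter by (intro card_UN_disjoint[symmetric]) auto
  also have "\<dots> \<le> card (- Q)" by (rule card_mono) auto
  also have "\<dots> = CARD('a) - card Q"
    using card_Diff_subset[of Q UNIV] by (simp add: Compl_eq_Diff_UNIV)
  also have "\<dots> = (CARD('a) - m) + t" using \<open>card Q \<le> m\<close> m unfolding t_def by simp
  finally have "(CARD('a) - m) * t + t \<le> (CARD('a) - m) + t" using B(2) m by (simp add: algebra_simps)
  moreover have "(CARD('a) - m) * 2 \<le> (CARD('a) - m) * t" using t by simp
  ultimately show False using m by linarith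
qed

text \<open>Level \<open>m\<close> of the descent in Kruskal's permutation lemma: it is established for
  \<open>m = k - 1\<close> from the counting hypothesis and carried down to \<open>m = 1\<close>, where each \<open>v\<^sub>j\<close>
  spans a line containing exactly one \<open>u\<^sub>i\<close>.\<close>

definition tight_span_level :: "('i::finite \<Rightarrow> 'a::euclidean_space) \<Rightarrow> ('i \<Rightarrow> 'a) \<Rightarrow> nat \<Rightarrow> bool" where
  "tight_span_level u v m \<longleftrightarrow>
     (\<forall>T. card T = m \<longrightarrow> dim (span (v ` T)) = m \<and>
        card {i. u i \<in> span (v ` T)} = m \<and> {j. v j \<in> span (v ` T)} = T)"

lemma tight_span_level_top:
  assumes u: "kruskal_indep u k" and k: "2 \<le> k"
    and H: "\<And>T. card T = k - 1 \<Longrightarrow> card {j. v j \<in> span (v ` T)} \<le> card {i. u i \<in> span (v ` T)}"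
  shows "tight_span_level u v (k - 1)"
  unfolding tight_span_level_def
proof (intro allI impI)
  fix T :: "'a set" assume T: "card T = k - 1"
  define A where "A = v ` T"
  have "dim A \<le> k - 1"
    using dim_le_card[of A A] span_superset[of A] card_image_le[of T v] T unfolding A_def by simp
  then have "card {i. u i \<in> span A} \<le> dim A" using card_in_span_le_dim[OF u k] k by simp
  moreover have sub: "T \<subseteq> {j. v j \<in> span A}" unfolding A_def by (auto intro: span_base)
  then have "k - 1 \<le> card {j. v j \<in> span A}" using T card_mono[OF _ sub] by simp
  moreover have "card {j. v j \<in> span A} \<le> card {i. u i \<in> span A}" using H[OF T] unfolding A_def .
  ultimately have "dim (span A) = k - 1" "card {i. u i \<in> span A} = k - 1"
    and "card {j. v j \<in> span A} = card T"
    using \<open>dim A \<le> k - 1\<close> T by simp_all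
  moreover have "{j. v j \<in> span A} = T" using card_subset_eq[OF _ sub] \<open>_ = card T\<close> by simp
  ultimately show "dim (span (v ` T)) = k - 1 \<and> card {i. u i \<in> span (v ` T)} = k - 1 \<and>
      {j. v j \<in> span (v ` T)} = T"
    unfolding A_def by simp
qed

lemma tight_span_level_below:
  assumes level: "tight_span_level u v m" and m: "1 \<le> m" and T: "card T = m - 1"
    and b: "b1 \<notin> T" "b2 \<notin> T" "b1 \<noteq> b2"
  shows "dim (span (v ` T)) = m - 1" and "{j. v j \<in> span (v ` T)} = T"
proof -
  have L: "dim (span (v ` insert b T)) = card (insert b T) \<and> {j. v j \<in> span (v ` insert b T)} = insert b T"
    if "b \<notin> T" for b
  proof -
    have "card (insert b T) = m" using T m that by (simp add: card_insert_if)
    then show ?thesis using level unfolding tight_span_level_def by metis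
  qed
  then have "dim (span (v ` T)) = card T"
    using dim_span_image_subset[of v "insert b1 T" T] b(1) by auto
  then show "dim (span (v ` T)) = m - 1" using T by simp
  have "span (v ` T) \<subseteq> span (v ` insert b T)" for b by (intro span_mono) auto
  then have "{j. v j \<in> span (v ` T)} \<subseteq> insert b1 T \<inter> insert b2 T" using L b by blast
  then show "{j. v j \<in> span (v ` T)} = T" using b(3) by (auto intro: span_base)
qed

lemma tight_span_level_step:
  assumes u: "kruskal_indep u k" and k: "2 \<le> k" and kn: "k \<le> CARD('i)"
    and level: "tight_span_level u v m" and m: "2 \<le> m" "m < k"
  shows "tight_span_level u (v :: 'i::finite \<Rightarrow> _) (m - 1)"
  unfolding tight_span_level_def
proof (intro allI impI)
  fix T :: "'i set" assume T: "card T = m - 1"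
  define P where "P = span (v ` T)"
  define L where "L = (\<lambda>b. span (v ` insert b T))"
  have L: "dim (L b) = m \<and> card {i. u i \<in> L b} = m \<and> {j. v j \<in> L b} = insert b T" if "b \<notin> T" for b
  proof -
    have "card (insert b T) = m" using T m that by (simp add: card_insert_if)
    then show ?thesis using level unfolding tight_span_level_def L_def by blast
  qed
  have card_out: "card (- T) = CARD('i) - m + 1"
    using card_Diff_subset[of T UNIV] T m kn by (simp add: Compl_eq_Diff_UNIV)
  then have "\<not> card (- T) \<le> Suc 0" using m k kn by linarith
  then obtain b1 b2 where "b1 \<notin> T" "b2 \<notin> T" "b1 \<noteq> b2"
    using card_le_Suc0_iff_eq[of "- T"] by auto
  note below = tight_span_level_below[OF level _ T this]
  have dim_P: "dim P = m - 1" using below(1) m by (simp add: P_def)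
  have "card {i. u i \<in> P} \<le> m - 1"
    using card_in_span_le_dim[OF u k, of "v ` T"] dim_P m by (simp add: P_def)
  moreover have "m - 1 \<le> card {i. u i \<in> P}"
  proof (rule card_core_ge_if_pairwise_inter_subset[where U = "\<lambda>b. {i. u i \<in> L b}" and B = "- T"])
    have P_sub: "P \<subseteq> L b" for b unfolding P_def L_def by (intro span_mono) auto
    then show "{i. u i \<in> P} \<subseteq> {i. u i \<in> L b} \<and> card {i. u i \<in> L b} = m" if "b \<in> - T" for b
      using L that by auto
    show "{i. u i \<in> L b} \<inter> {i. u i \<in> L b'} \<subseteq> {i. u i \<in> P}"
      if "b \<in> - T" "b' \<in> - T" "b \<noteq> b'" for b b'
    proof
      fix i assume i: "i \<in> {i. u i \<in> L b} \<inter> {i. u i \<in> L b'}"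
      have "v b' \<in> L b'" unfolding L_def by (simp add: span_base)
      moreover have "v b' \<notin> L b" using L[of b] that by auto
      ultimately have "L b \<noteq> L b'" by blast
      moreover have "subspace (L c)" "dim (L c) \<le> dim P + 1" if "c \<in> - T" for c
        using L[of c] that dim_P m unfolding L_def by auto
      ultimately have "u i \<in> span P"
        using in_span_if_in_distinct_extensions[of "L b" P "L b'"] P_sub i that by blast
      then show "i \<in> {i. u i \<in> P}" by (simp add: P_def span_span)
    qed
  qed (use card_out m kn in auto)
  ultimately show "dim (span (v ` T)) = m - 1 \<and> card {i. u i \<in> span (v ` T)} = m - 1 \<and>
      {j. v j \<in> span (v ` T)} = T"
    using below m unfolding P_def by simp
qed

lemma rescaled_permutation_if_tight_span_level_one:
  assumes u: "kruskal_indep u k" "1 \<le> k" and level: "tight_span_level u v 1"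
  obtains \<sigma> c where "\<sigma> permutes UNIV" "\<And>j. c j \<noteq> 0" "\<And>j. v j = c j *\<^sub>R u (\<sigma> j)"
proof -
  have one: "card {i. u i \<in> span {v j}} = 1" "{j'. v j' \<in> span {v j}} = {j}" for j
    using level[unfolded tight_span_level_def, rule_format, of "{j}"] by simp_all
  have "\<forall>j. \<exists>i. {i'. u i' \<in> span {v j}} = {i}"
    using one(1) by (simp add: card_1_singleton_iff)
  then obtain \<sigma> where \<sigma>: "\<And>j. {i. u i \<in> span {v j}} = {\<sigma> j}" by metis
  have "\<exists>c. c \<noteq> 0 \<and> v j = c *\<^sub>R u (\<sigma> j)" for j
  proof -
    obtain t where t: "u (\<sigma> j) = t *\<^sub>R v j" using \<sigma>[of j] by (auto simp: span_singleton)
    moreover have "u (\<sigma> j) \<noteq> 0" using kruskal_indep_nonzero[OF u] .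
    ultimately show ?thesis by (intro exI[of _ "inverse t"]) auto
  qed
  then obtain c where c: "\<And>j. c j \<noteq> 0" "\<And>j. v j = c j *\<^sub>R u (\<sigma> j)" by metis
  have "inj \<sigma>"
  proof (rule injI)
    fix j j' assume "\<sigma> j = \<sigma> j'"
    then have "v j' = (c j' / c j) *\<^sub>R v j" using c by simp
    then have "j' \<in> {j''. v j'' \<in> span {v j}}" by (simp add: span_mul span_base)
    then show "j = j'" using one(2)[of j] by simp
  qed
  then have "bij \<sigma>" using finite_UNIV_inj_surj[of \<sigma>] by (simp add: bij_def)
  then have "\<sigma> permutes UNIV" by (intro bij_imp_permutes) simp_all
  then show ?thesis using that c by blast
qed

lemma kruskal_permutation_lemma:
  assumes u: "kruskal_indep u k" and k: "2 \<le> k" and kn: "k \<le> CARD('i)"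
    and H: "\<And>T. card T = k - 1 \<Longrightarrow>
      card {j. v j \<in> span (v ` T)} \<le> card {i. u i \<in> span (v ` T)}"
  obtains \<sigma> c where "\<sigma> permutes UNIV" "\<And>j. c j \<noteq> 0"
    "\<And>j. (v :: 'i::finite \<Rightarrow> _) j = c j *\<^sub>R u (\<sigma> j)"
proof -
  have "tight_span_level u v (k - 1 - d)" if "d \<le> k - 2" for d
    using that
  proof (induction d)
    case 0
    then show ?case using tight_span_level_top[OF u k H] by simp
  next
    case (Suc d)
    then have "tight_span_level u v (k - 1 - d - 1)"
      using tight_span_level_step[OF u k kn, of v "k - 1 - d"] by simp
    then show ?case by (simp add: diff_diff_add)
  qed
  from this[of "k - 2"] have "tight_span_level u v 1"
    using k by (simp add: numeral_2_eq_2)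
  moreover have "1 \<le> k" using k by simp
  ultimately show ?thesis using rescaled_permutation_if_tight_span_level_one[OF u] that by blast
qed

section \<open>Uniqueness of decompositions into powers of linear forms\<close>

lemma coefficients_eq_if_rescaled_permutation:
  fixes u v :: "'i::finite \<Rightarrow> 'a::euclidean_space" and a b :: "'i \<Rightarrow> real"
  assumes u: "kruskal_indep u k" and k: "2 \<le> k" and n: "CARD('i) \<le> r * (k - 1) + 1"
    and \<sigma>: "\<sigma> permutes UNIV" and c: "\<And>j. v j = c j *\<^sub>R u (\<sigma> j)"
    and eq: "\<And>Z. (\<Sum>i\<in>UNIV. a i * (\<Prod>l<r. u i \<bullet> Z l)) = (\<Sum>j\<in>UNIV. b j * (\<Prod>l<r. v j \<bullet> Z l))"
  shows "b j * c j ^ r = a (\<sigma> j)"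
proof -
  define e where "e = (\<lambda>i. a i - b (inv \<sigma> i) * c (inv \<sigma> i) ^ r)"
  have "(\<Sum>i\<in>UNIV. e i * (\<Prod>l<r. u i \<bullet> Z l)) = 0" for Z
  proof -
    have "(\<Sum>j\<in>UNIV. b j * (\<Prod>l<r. v j \<bullet> Z l))
        = (\<Sum>j\<in>UNIV. b j * c j ^ r * (\<Prod>l<r. u (\<sigma> j) \<bullet> Z l))"
      using c by (simp add: prod.distrib mult.assoc)
    also have "\<dots> = (\<Sum>i\<in>UNIV. b (inv \<sigma> i) * c (inv \<sigma> i) ^ r * (\<Prod>l<r. u i \<bullet> Z l))"
      using sum.permute[OF permutes_inv[OF \<sigma>],
          where g = "\<lambda>j. b j * c j ^ r * (\<Prod>l<r. u (\<sigma> j) \<bullet> Z l)"]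
        permutes_inverses(1)[OF \<sigma>]
      by (simp add: comp_def)
    finally show ?thesis
      using eq[of Z] unfolding e_def by (simp add: left_diff_distrib sum_subtractf)
  qed
  then have "\<forall>i\<in>UNIV. e i = 0" using prod_inner_independent[OF u k, of UNIV r e] n by simp
  then show ?thesis using permutes_inverses(2)[OF \<sigma>] unfolding e_def by simp
qed

theorem power_sum_decomposition_unique:
  fixes u v :: "'i::finite \<Rightarrow> 'a::euclidean_space" and A B :: "'k \<Rightarrow> 'i \<Rightarrow> real"
  assumes u: "kruskal_indep u k" and k: "2 \<le> k" "k \<le> CARD('i)"
    and A: "\<And>i. \<exists>k'. A k' i \<noteq> 0"
    and eq: "\<And>k' x. (\<Sum>i\<in>UNIV. A k' i * (u i \<bullet> x) ^ r) = (\<Sum>j\<in>UNIV. B k' j * (v j \<bullet> x) ^ r)"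
    and r: "2 * s + 1 \<le> r" and n: "2 * CARD('i) \<le> 2 * (s * (k - 1)) + k"
  obtains \<sigma> c where "\<sigma> permutes UNIV" "\<And>j. c j \<noteq> 0" "\<And>j. v j = c j *\<^sub>R u (\<sigma> j)"
    "\<And>k' j. B k' j * c j ^ r = A k' (\<sigma> j)"
proof -
  define q where "q = r - 1 - s"
  have r_eq: "r = Suc (s + q)" and "s \<le> q" using r unfolding q_def by auto
  have multilinear: "(\<Sum>i\<in>UNIV. A k' i * (\<Prod>l<r. u i \<bullet> Z l)) = (\<Sum>j\<in>UNIV. B k' j * (\<Prod>l<r. v j \<bullet> Z l))"
    for k' Z by (rule power_sum_eq_imp_multilinear_eq[where a = "A k'" and b = "B k'", OF eq])
  obtain \<sigma> c where \<sigma>: "\<sigma> permutes UNIV" and c: "\<And>j. c j \<noteq> 0" "\<And>j. v j = c j *\<^sub>R u (\<sigma> j)"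
    using kruskal_permutation_lemma[OF u k card_in_span_le[OF u k(1) A multilinear[unfolded r_eq]
          \<open>s \<le> q\<close> n]] by blast
  have "(2 * s + 1) * (k - 1) \<le> r * (k - 1)" using r by (rule mult_le_mono1)
  then have "CARD('i) \<le> r * (k - 1) + 1" using n k by (simp add: algebra_simps)
  then show ?thesis
    using that[OF \<sigma> c] coefficients_eq_if_rescaled_permutation[OF u k(1) _ \<sigma> c(2) multilinear]
    by blast
qed

section \<open>Networks, matrices and Kruskal rank\<close>

lemma hpnn2_component:
  "hpnn2 r W1 W2 x $ k = (\<Sum>i\<in>UNIV. W2 $ k $ i * (W1 $ i \<bullet> x) ^ r)"
  unfolding hpnn2_def rho_def
  by (simp add: matrix_vector_mult_def matrix_vector_mul_component[symmetric])

lemma perm_matrix_mult_row: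
  "((\<chi> i j. if j = \<sigma> i then 1 else 0) ** M) $ i = (M :: 'a::semiring_1^'p^'m) $ \<sigma> i"
  by (simp add: matrix_matrix_mult_def vec_eq_iff if_distrib if_distribR sum.delta cong: if_cong)

lemma diag_mat_mult_row: "(diag_mat d ** M) $ i = d i *\<^sub>R M $ i"
  by (simp add: matrix_matrix_mult_def diag_mat_def vec_eq_iff if_distrib if_distribR sum.delta'
      cong: if_cong)

lemma mult_diag_mat_entry: "(M ** diag_mat d) $ k $ j = M $ k $ j * d j"
  by (simp add: matrix_matrix_mult_def diag_mat_def if_distrib if_distribR sum.delta' cong: if_cong)

lemma mult_transpose_perm_matrix_entry:
  "(M ** transpose (\<chi> i j. if j = \<sigma> i then 1 else 0)) $ k $ j = (M :: 'a::semiring_1^'m^'n) $ k $ \<sigma> j"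
  by (simp add: matrix_matrix_mult_def transpose_def if_distrib if_distribR sum.delta' cong: if_cong)

lemma hpnn2_equiv_if_rescaled_permutation:
  fixes W1 W1' :: "real^'d0^'d1" and W2 W2' :: "real^'d1^'d2"
  assumes \<sigma>: "\<sigma> permutes UNIV" and c: "\<And>j. c j \<noteq> 0"
    and W1: "\<And>j. W1' $ j = c j *\<^sub>R W1 $ \<sigma> j"
    and W2: "\<And>k j. W2' $ k $ j * c j ^ r = W2 $ k $ \<sigma> j"
  shows "hpnn2_equiv r W1 W2 W1' W2'"
  unfolding hpnn2_equiv_def
proof (intro exI[of _ "\<chi> i j. if j = \<sigma> i then 1 else 0"] exI[of _ "\<lambda>i. c (inv \<sigma> i)"] conjI)
  have inv: "inv \<sigma> (\<sigma> j) = j" for j using permutes_inverses(2)[OF \<sigma>] .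
  show "permutation_matrix (\<chi> i j. if j = \<sigma> i then 1 else (0::real))"
    unfolding permutation_matrix_def using \<sigma> by blast
  show "\<forall>i. c (inv \<sigma> i) \<noteq> 0" using c by blast
  have "W1' $ j = ((\<chi> i j. if j = \<sigma> i then 1 else 0) ** diag_mat (\<lambda>i. c (inv \<sigma> i)) ** W1) $ j"
    for j by (simp add: matrix_mul_assoc[symmetric] perm_matrix_mult_row diag_mat_mult_row W1 inv)
  then show "W1' = (\<chi> i j. if j = \<sigma> i then 1 else 0) ** diag_mat (\<lambda>i. c (inv \<sigma> i)) ** W1"
    by (simp add: vec_eq_iff)
  show "W2' = W2 ** diag_mat (\<lambda>i. inverse (c (inv \<sigma> i)) ^ r) ** transpose (\<chi> i j. if j = \<sigma> i then 1 else 0)"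
    using W2 c
    by (simp add: vec_eq_iff mult_transpose_perm_matrix_entry mult_diag_mat_entry inv
        power_inverse[symmetric] field_simps)
qed

lemma krank_le_card_and_cols_indep:
  fixes A :: "real^'n::finite^'m::finite"
  shows "krank A \<le> CARD('n) \<and> (\<forall>S :: 'n set. card S = krank A \<longrightarrow> cols_indep A S)"
proof -
  let ?K = "{k. k \<le> CARD('n) \<and> (\<forall>S :: 'n set. card S = k \<longrightarrow> cols_indep A S)}"
  have "finite ?K" by (rule finite_subset[of _ "{..CARD('n)}"]) auto
  moreover have "0 \<in> ?K" by (auto simp: cols_indep_def)
  ultimately have "krank A \<in> ?K" unfolding krank_def by (intro Max_in) auto
  then show ?thesis by simp
qed

lemma cols_indep_subset:
  assumes "cols_indep A S'" "S \<subseteq> S'"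
  shows "cols_indep A S"
  unfolding cols_indep_def
proof (intro allI impI ballI)
  fix c j assume s: "(\<Sum>j\<in>S. c j *s column j A) = 0" and j: "j \<in> S"
  define c' where "c' = (\<lambda>j. if j \<in> S then c j else 0)"
  have "(\<Sum>j\<in>S'. c' j *s column j A) = (\<Sum>j\<in>S. c j *s column j A)"
    unfolding c'_def using assms(2)
    by (subst sum.mono_neutral_right[of S' S]) (auto intro!: sum.cong)
  then have "(\<Sum>j\<in>S'. c' j *s column j A) = 0" using s by simp
  then have "c' j = 0" using assms j unfolding cols_indep_def by blast
  then show "c j = 0" using j unfolding c'_def by simp
qed

lemma cols_indep_if_card_le_krank:
  fixes A :: "real^'n::finite^'m::finite"
  assumes "card S \<le> krank A"
  shows "cols_indep A S"
proof -
  have "krank A \<le> CARD('n)" using krank_le_card_and_cols_indep[of A] by simp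
  moreover have "card (UNIV - S) = CARD('n) - card S" by (simp add: card_Diff_subset)
  ultimately have "krank A - card S \<le> card (UNIV - S)" by linarith
  then obtain R where R: "R \<subseteq> UNIV - S" "card R = krank A - card S"
    by (meson obtain_subset_with_card_n)
  have "card (S \<union> R) = krank A" using R assms by (subst card_Un_disjoint) auto
  then show ?thesis
    using krank_le_card_and_cols_indep[of A] cols_indep_subset[of A "S \<union> R" S] by blast
qed

lemma kruskal_indep_rows_if_krank:
  fixes W :: "real^'n::finite^'m::finite"
  assumes "k \<le> krank (transpose W)"
  shows "kruskal_indep (\<lambda>i. W $ i) k"
  unfolding kruskal_indep_def
proof (intro allI impI ballI)
  fix T c j assume T: "card T \<le> k" and s: "(\<Sum>j\<in>T. c j *\<^sub>R W $ j) = 0" and j: "j \<in> T"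
  have "column j (transpose W) = W $ j" for j
    by (simp add: column_def transpose_def vec_eq_iff)
  then have "(\<Sum>j\<in>T. c j *s column j (transpose W)) = 0" using s by (simp add: scalar_mult_eq_scaleR)
  then show "c j = 0"
    using cols_indep_if_card_le_krank[of T "transpose W"] T assms j unfolding cols_indep_def by auto
qed

lemma column_nonzero_if_krank_pos:
  fixes W :: "real^'n::finite^'m::finite"
  assumes "1 \<le> krank W"
  shows "\<exists>k. W $ k $ i \<noteq> 0"
proof (rule ccontr)
  assume "\<not> ?thesis"
  then have "(\<Sum>j\<in>{i}. (\<lambda>_. 1::real) j *s column j W) = 0" by (simp add: column_def vec_eq_iff)
  moreover have "cols_indep W {i}" using cols_indep_if_card_le_krank[of "{i}" W] assms by simp
  ultimately show False unfolding cols_indep_def by auto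
qed

lemma exists_split_of_ceiling_bound:
  fixes n k r :: nat
  assumes k: "2 \<le> k" "k \<le> n"
    and r: "real r \<ge> 2 * of_int \<lceil>(2 * real n - real k) / (2 * real k - 2)\<rceil> + 1"
  obtains s where "2 * s + 1 \<le> r" "2 * n \<le> 2 * (s * (k - 1)) + k"
proof -
  define x where "x = (2 * real n - real k) / (2 * real k - 2)"
  have den: "2 * real k - 2 > 0" using k by simp
  have "x \<ge> 0" using k den unfolding x_def by simp
  define s where "s = nat \<lceil>x\<rceil>"
  have s: "real s = of_int \<lceil>x\<rceil>" using \<open>x \<ge> 0\<close> unfolding s_def by simp
  have "2 * s + 1 \<le> r" using r s unfolding x_def by linarith
  moreover have "2 * n \<le> 2 * (s * (k - 1)) + k"
  proof -
    have "2 * real n - real k = x * (2 * real k - 2)" using den unfolding x_def by simp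
    also have "\<dots> \<le> real s * (2 * real k - 2)"
      using s le_of_int_ceiling[of x] den by (intro mult_right_mono) auto
    finally have "2 * real n \<le> 2 * (real s * (real k - 1)) + real k"
      by (simp add: algebra_simps)
    moreover have "real (k - 1) = real k - 1" using k by simp
    ultimately have "real (2 * n) \<le> real (2 * (s * (k - 1)) + k)"
      by (simp only: of_nat_add of_nat_mult of_nat_numeral)
    then show ?thesis by (simp only: of_nat_le_iff)
  qed
  ultimately show ?thesis using that by blast
qed

theorem mainTheorem15:
  fixes W1 :: "real^'d0^'d1" and W2 :: "real^'d1^'d2" and r1 :: nat
  assumes "CARD('d0) \<ge> 2" and "CARD('d1) \<ge> 2" and "CARD('d2) \<ge> 1"
    and "r1 \<ge> 3"
    and "krank W2 \<ge> 1" and "krank (transpose W1) \<ge> 2"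
    and "real r1 \<ge> 2 * of_int \<lceil>(2 * real CARD('d1) - real (krank (transpose W1)))
                               / (2 * real (krank (transpose W1)) - 2)\<rceil> + 1"
  shows "hpnn2_unique r1 W1 W2"
proof -
  define k where "k = krank (transpose W1)"
  have k: "2 \<le> k" "k \<le> CARD('d1)"
    using assms(6) krank_le_card_and_cols_indep[of "transpose W1"] unfolding k_def by auto
  obtain s where s: "2 * s + 1 \<le> r1" "2 * CARD('d1) \<le> 2 * (s * (k - 1)) + k"
    using exists_split_of_ceiling_bound[OF k] assms(7) unfolding k_def by blast
  have rows: "kruskal_indep (\<lambda>i. W1 $ i) k" by (rule kruskal_indep_rows_if_krank) (simp add: k_def)
  have cols: "\<And>i. \<exists>k'. W2 $ k' $ i \<noteq> 0" by (rule column_nonzero_if_krank_pos[OF assms(5)])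
  show ?thesis
    unfolding hpnn2_unique_def
  proof (intro allI impI)
    fix W1' :: "real^'d0^'d1" and W2' :: "real^'d1^'d2"
    assume "hpnn2 r1 W1' W2' = hpnn2 r1 W1 W2"
    then have "hpnn2 r1 W1 W2 x $ k' = hpnn2 r1 W1' W2' x $ k'" for k' x by simp
    then have "(\<Sum>i\<in>UNIV. W2 $ k' $ i * (W1 $ i \<bullet> x) ^ r1)
        = (\<Sum>j\<in>UNIV. W2' $ k' $ j * (W1' $ j \<bullet> x) ^ r1)" for k' x
      unfolding hpnn2_component .
    then obtain \<sigma> c where "\<sigma> permutes UNIV" "\<And>j. c j \<noteq> 0" "\<And>j. W1' $ j = c j *\<^sub>R W1 $ \<sigma> j"
      "\<And>k' j. W2' $ k' $ j * c j ^ r1 = W2 $ k' $ \<sigma> j"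
      by (rule power_sum_decomposition_unique[OF rows k cols _ s]) blast
    then show "hpnn2_equiv r1 W1 W2 W1' W2'" by (rule hpnn2_equiv_if_rescaled_permutation)
  qed
qed

end
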